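(* Let $A=A_1A_2A_3$ and $B=B_1B_2B_3$ be triangles in the real projective plane that are perspective from a line $s$: for each permutation $(i,j,k)$ of $(1,2,3)$ the point $L_i=A_kA_j\cap B_kB_j$ lies on $s$. For each permutation $(i,j,k)$ of $(1,2,3)$ let $C_k=A_iB_j\cap A_jB_i$ (assuming general position so that these points are well defined). Then the triangle $C=C_1C_2C_3$ is perspective from the line $s$ to both $A$ and $B$; i.e., for each permutation $(i,j,k)$ the lines $C_iC_j$, $A_iA_j$, $B_iB_j$ all pass through the point $L_k\in s$.
   Context: Two configurations with a correspondence between their lines are perspective from a line $\ell$ if all intersection points of corresponding lines lie on $\ell$; for triangles the correspondence is $A_iA_j\leftrightarrow B_iB_j\leftrightarrow C_iC_j$. *)

theory Defs
  imports "HOL-Analysis.Analysis" "HOL-Analysis.Cross3"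
begin

text \<open>Real projective plane via homogeneous coordinates: points and lines are
  nonzero vectors of real^3 (up to nonzero scalars).\<close>

definition pt :: "real^3 \<Rightarrow> bool" where
  "pt p \<longleftrightarrow> p \<noteq> 0"

definition proj_eq :: "real^3 \<Rightarrow> real^3 \<Rightarrow> bool" where
  "proj_eq p q \<longleftrightarrow> cross3 p q = 0"

definition join :: "real^3 \<Rightarrow> real^3 \<Rightarrow> real^3" where
  "join p q = cross3 p q"

definition meet :: "real^3 \<Rightarrow> real^3 \<Rightarrow> real^3" where
  "meet l m = cross3 l m"

definition incident :: "real^3 \<Rightarrow> real^3 \<Rightarrow> bool" where
  "incident p l \<longleftrightarrow> p \<bullet> l = 0"

definition collinear3 :: "real^3 \<Rightarrow> real^3 \<Rightarrow> real^3 \<Rightarrow> bool" where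
  "collinear3 p q r \<longleftrightarrow> p \<bullet> cross3 q r = 0"

definition triangle :: "real^3 \<Rightarrow> real^3 \<Rightarrow> real^3 \<Rightarrow> bool" where
  "triangle p q r \<longleftrightarrow> pt p \<and> pt q \<and> pt r \<and> \<not> collinear3 p q r"

end

theory Submission
  imports Defs
begin

text \<open>In homogeneous coordinates the three points \<open>L\<^sub>i\<close> lie on the line \<open>s\<close>, so
  \<open>det(L\<^sub>1, L\<^sub>2, L\<^sub>3) = 0\<close>. This determinant factors as
  \<open>det A \<cdot> det B \<cdot> det(A\<^sub>1B\<^sub>1, A\<^sub>2B\<^sub>2, A\<^sub>3B\<^sub>3)\<close>, and the triangles are nondegenerate, so the
  lines \<open>A\<^sub>iB\<^sub>i\<close> are concurrent (the converse of Desargues' theorem). The determinant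
  expressing that \<open>L\<^sub>3\<close> lies on \<open>C\<^sub>1C\<^sub>2\<close> has the same last factor, hence vanishes as well.\<close>

unbundle cross3_syntax

lemma triple_product_scaleR_eq:
  fixes p q r s :: "real^3"
  shows "(p \<bullet> (q \<times> r)) *\<^sub>R s = (s \<bullet> p) *\<^sub>R (q \<times> r) + (s \<bullet> q) *\<^sub>R (r \<times> p) + (s \<bullet> r) *\<^sub>R (p \<times> q)"
  unfolding cross3_def inner_vec_def sum_3 vector_def vec_eq_iff
  by (auto simp: forall_3 algebra_simps)

lemma collinear3_if_incident:
  assumes "s \<noteq> 0" and "incident p s" "incident q s" "incident r s"
  shows "collinear3 p q r"
proof -
  have "(p \<bullet> (q \<times> r)) *\<^sub>R s = 0"
    using triple_product_scaleR_eq[of p q r s] assms(2-4)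
    by (simp add: incident_def inner_commute)
  with \<open>s \<noteq> 0\<close> show ?thesis
    by (simp add: collinear3_def)
qed

lemma collinear3_rotate: "collinear3 p q r \<longleftrightarrow> collinear3 q r p"
  unfolding collinear3_def by (metis cross_triple inner_commute)

lemma incident_meet_join_swap:
  "incident (meet (join a b) m) (join b a)" "incident (meet l (join a b)) (join b a)"
  unfolding incident_def meet_def join_def by (simp_all add: cross_skew[of b a] dot_cross_self)

lemma triple_product_side_points:
  fixes A1 A2 A3 B1 B2 B3 :: "real^3"
  shows "((A3 \<times> A2) \<times> (B3 \<times> B2)) \<bullet> (((A1 \<times> A3) \<times> (B1 \<times> B3)) \<times> ((A2 \<times> A1) \<times> (B2 \<times> B1)))
    = (A1 \<bullet> (A2 \<times> A3)) * (B1 \<bullet> (B2 \<times> B3)) * ((A1 \<times> B1) \<bullet> ((A2 \<times> B2) \<times> (A3 \<times> B3)))"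
  unfolding cross3_def inner_vec_def sum_3 vector_def by (simp; algebra)

lemma triple_product_side_point_cross_points:
  fixes A1 A2 A3 B1 B2 B3 :: "real^3"
  shows "((A2 \<times> A1) \<times> (B2 \<times> B1)) \<bullet> (((A2 \<times> B3) \<times> (A3 \<times> B2)) \<times> ((A3 \<times> B1) \<times> (A1 \<times> B3)))
    = ((A1 \<times> B1) \<bullet> ((A2 \<times> B2) \<times> (A3 \<times> B3))) * (A1 \<bullet> (A2 \<times> B3)) * (B1 \<bullet> (B2 \<times> A3))"
  unfolding cross3_def inner_vec_def sum_3 vector_def by (simp; algebra)

lemma perspective_from_line_imp_perspective_from_point:
  assumes "triangle A1 A2 A3" and "triangle B1 B2 B3"
    and "collinear3 (meet (join A3 A2) (join B3 B2)) (meet (join A1 A3) (join B1 B3))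
                    (meet (join A2 A1) (join B2 B1))"
  shows "collinear3 (join A1 B1) (join A2 B2) (join A3 B3)"
  using assms
  by (simp add: triangle_def collinear3_def meet_def join_def triple_product_side_points)

lemma side_point_incident_cross_points_join:
  assumes "collinear3 (join A1 B1) (join A2 B2) (join A3 B3)"
  shows "incident (meet (join A2 A1) (join B2 B1))
           (join (meet (join A2 B3) (join A3 B2)) (meet (join A3 B1) (join A1 B3)))"
  using assms
  by (simp add: collinear3_def incident_def meet_def join_def triple_product_side_point_cross_points)

theorem theorem4:
  fixes A1 A2 A3 B1 B2 B3 s :: "real^3"
  assumes triA: "triangle A1 A2 A3"
    and triB: "triangle B1 B2 B3"
    and s_line: "s \<noteq> 0"
    \<comment> \<open>general position: the lines A_jA_k and B_jB_k are distinct, so L_i is well defined\<close>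
    and gp_L1: "\<not> proj_eq (join A2 A3) (join B2 B3)"
    and gp_L2: "\<not> proj_eq (join A3 A1) (join B3 B1)"
    and gp_L3: "\<not> proj_eq (join A1 A2) (join B1 B2)"
    \<comment> \<open>perspective from the line s\<close>
    and persp1: "incident (meet (join A3 A2) (join B3 B2)) s"
    and persp2: "incident (meet (join A1 A3) (join B1 B3)) s"
    and persp3: "incident (meet (join A2 A1) (join B2 B1)) s"
    \<comment> \<open>general position: C_k = A_iB_j \<inter> A_jB_i is well defined\<close>
    and gp_AB12: "\<not> proj_eq A1 B2" and gp_AB21: "\<not> proj_eq A2 B1"
    and gp_AB13: "\<not> proj_eq A1 B3" and gp_AB31: "\<not> proj_eq A3 B1"
    and gp_AB23: "\<not> proj_eq A2 B3" and gp_AB32: "\<not> proj_eq A3 B2"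
    and gp_C1: "\<not> proj_eq (join A2 B3) (join A3 B2)"
    and gp_C2: "\<not> proj_eq (join A3 B1) (join A1 B3)"
    and gp_C3: "\<not> proj_eq (join A1 B2) (join A2 B1)"
  shows
    "let L1 = meet (join A3 A2) (join B3 B2);
         L2 = meet (join A1 A3) (join B1 B3);
         L3 = meet (join A2 A1) (join B2 B1);
         C1 = meet (join A2 B3) (join A3 B2);
         C2 = meet (join A3 B1) (join A1 B3);
         C3 = meet (join A1 B2) (join A2 B1)
     in incident L3 (join C1 C2) \<and> incident L3 (join A1 A2) \<and> incident L3 (join B1 B2) \<and>
        incident L1 (join C2 C3) \<and> incident L1 (join A2 A3) \<and> incident L1 (join B2 B3) \<and>
        incident L2 (join C3 C1) \<and> incident L2 (join A3 A1) \<and> incident L2 (join B3 B1) \<and>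
        incident L1 s \<and> incident L2 s \<and> incident L3 s"
proof -
  have concurrent: "collinear3 (join A1 B1) (join A2 B2) (join A3 B3)"
    using perspective_from_line_imp_perspective_from_point[OF triA triB]
      collinear3_if_incident[OF s_line persp1 persp2 persp3] .
  then have "collinear3 (join A2 B2) (join A3 B3) (join A1 B1)"
    and "collinear3 (join A3 B3) (join A1 B1) (join A2 B2)"
    using collinear3_rotate by blast+
  then have "incident (meet (join A2 A1) (join B2 B1))
               (join (meet (join A2 B3) (join A3 B2)) (meet (join A3 B1) (join A1 B3)))"
    and "incident (meet (join A3 A2) (join B3 B2))
               (join (meet (join A3 B1) (join A1 B3)) (meet (join A1 B2) (join A2 B1)))"
    and "incident (meet (join A1 A3) (join B1 B3))
               (join (meet (join A1 B2) (join A2 B1)) (meet (join A2 B3) (join A3 B2)))"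
    using side_point_incident_cross_points_join concurrent
    by blast+
  then show ?thesis
    using persp1 persp2 persp3
    by (simp add: Let_def incident_meet_join_swap)
qed

end
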